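(* For $n\ge2$ and all $P,Q\in\Gamma_n$, $D_{\Psi I}(P\|Q)\le \frac{10}9 D_{\Psi h}(P\|Q)$.
   Context: $\Gamma_n=\{P=(p_1,\dots,p_n): p_i>0,\ \sum p_i=1\}$. $h(P\|Q)=\frac12\sum_{i=1}^n(\sqrt{p_i}-\sqrt{q_i})^2$; $\Psi(P\|Q)=\sum_{i=1}^n\frac{(p_i-q_i)^2(p_i+q_i)}{p_iq_i}$; $I(P\|Q)=\frac12\Big[\sum_{i=1}^n p_i\ln\frac{2p_i}{p_i+q_i}+\sum_{i=1}^n q_i\ln\frac{2q_i}{p_i+q_i}\Big]$. $D_{\Psi I}=\frac1{16}\Psi-I$, $D_{\Psi h}=\frac1{16}\Psi-h$. *)

theory Defs
  imports Complex_Main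
begin

definition Gamma :: "nat \<Rightarrow> (nat \<Rightarrow> real) set" where
  "Gamma n = {p. (\<forall>i<n. p i > 0) \<and> (\<Sum>i<n. p i) = 1}"

definition hell :: "nat \<Rightarrow> (nat \<Rightarrow> real) \<Rightarrow> (nat \<Rightarrow> real) \<Rightarrow> real" where
  "hell n p q = (1/2) * (\<Sum>i<n. (sqrt (p i) - sqrt (q i))^2)"

definition Psi :: "nat \<Rightarrow> (nat \<Rightarrow> real) \<Rightarrow> (nat \<Rightarrow> real) \<Rightarrow> real" where
  "Psi n p q = (\<Sum>i<n. (p i - q i)^2 * (p i + q i) / (p i * q i))"

definition JSI :: "nat \<Rightarrow> (nat \<Rightarrow> real) \<Rightarrow> (nat \<Rightarrow> real) \<Rightarrow> real" where
  "JSI n p q = (1/2) * ((\<Sum>i<n. p i * ln (2 * p i / (p i + q i)))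
                       + (\<Sum>i<n. q i * ln (2 * q i / (p i + q i))))"

definition D_PsiI :: "nat \<Rightarrow> (nat \<Rightarrow> real) \<Rightarrow> (nat \<Rightarrow> real) \<Rightarrow> real" where
  "D_PsiI n p q = Psi n p q / 16 - JSI n p q"

definition D_Psih :: "nat \<Rightarrow> (nat \<Rightarrow> real) \<Rightarrow> (nat \<Rightarrow> real) \<Rightarrow> real" where
  "D_Psih n p q = Psi n p q / 16 - hell n p q"

end

theory Submission
  imports Defs
begin

text \<open>
  The inequality is equivalent to \<open>0 \<le> \<Psi>/16 - 10 h + 9 I\<close>, and this holds termwise.
  Each summand is \<open>q\<close> times a function \<open>g\<close> of \<open>t = sqrt (p/q)\<close> with \<open>g 1 = 0\<close> and
  \<open>g' t = 2 t s t\<close>, where \<open>s 1 = 0\<close> and \<open>s' t = (t - 1)^4 \<cdot> (positive) / (4 t^5 (t^2 + 1)) \<ge> 0\<close>.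
  So \<open>g'\<close> changes sign from \<open>-\<close> to \<open>+\<close> at \<open>1\<close>, and \<open>g\<close> is minimal there.
\<close>

lemma DERIV_sign_change_imp_minimum:
  fixes f f' :: "real \<Rightarrow> real"
  assumes "\<And>x. a < x \<Longrightarrow> (f has_real_derivative f' x) (at x)"
    and "\<And>x. a < x \<Longrightarrow> x \<le> c \<Longrightarrow> f' x \<le> 0"
    and "\<And>x. c \<le> x \<Longrightarrow> 0 \<le> f' x"
    and "a < c" "a < t"
  shows "f c \<le> f t"
proof (cases "t \<le> c")
  case True
  show ?thesis
    by (rule deriv_nonpos_imp_antimono[of t c f f']) (use assms True in auto)
next
  case False
  show ?thesis
    by (rule deriv_nonneg_imp_mono[of c t f f']) (use assms False in auto)
qed

definition gap_term :: "real \<Rightarrow> real \<Rightarrow> real" where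
  "gap_term p q = (p - q)^2 * (p + q) / (p * q) / 16 - 5 * (sqrt p - sqrt q)^2
     + 9/2 * (p * ln (2 * p / (p + q)) + q * ln (2 * q / (p + q)))"

definition gap_fun :: "real \<Rightarrow> real" where
  "gap_fun t = (t^2 - 1)^2 * (t^2 + 1) / (16 * t^2) - 5 * (t - 1)^2
     + 9/2 * (t^2 * (ln 2 + 2 * ln t - ln (t^2 + 1)) + ln 2 - ln (t^2 + 1))"

definition gap_slope :: "real \<Rightarrow> real" where
  "gap_slope t = (2 * t^2 - 1 - 1 / t^4) / 16 - 5 + 5 / t
     + 9/2 * (ln 2 + 2 * ln t - ln (t^2 + 1))"

lemma gap_slope_has_derivative:
  assumes "0 < t"
  shows "(gap_slope has_real_derivative
           (t - 1)^4 * ((t^2 + 1)^2 + 4 * t * (t^2 + 1) + 9 * t^2) / (4 * t^5 * (t^2 + 1))) (at t)"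
proof -
  have "0 < t^2 + 1" "t^2 + 1 \<noteq> 0" by (smt (verit) zero_le_power2)+
  show ?thesis
    unfolding gap_slope_def[abs_def]
    apply (rule derivative_eq_intros refl | (use assms \<open>0 < t^2 + 1\<close> in simp; fail))+
    using assms \<open>t^2 + 1 \<noteq> 0\<close> by (simp add: divide_simps) algebra
qed

lemma gap_slope_mono:
  assumes "0 < s" "s \<le> t"
  shows "gap_slope s \<le> gap_slope t"
proof (rule DERIV_nonneg_imp_nondecreasing[OF assms(2)])
  fix x assume "s \<le> x"
  with assms have "0 < x" by simp
  then have "0 \<le> (x - 1)^4 * ((x^2 + 1)^2 + 4 * x * (x^2 + 1) + 9 * x^2) / (4 * x^5 * (x^2 + 1))"
    by (simp add: add_pos_nonneg)
  with gap_slope_has_derivative[OF \<open>0 < x\<close>]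
  show "\<exists>y. (gap_slope has_real_derivative y) (at x) \<and> 0 \<le> y" by blast
qed

lemma gap_fun_has_derivative:
  assumes "0 < t"
  shows "(gap_fun has_real_derivative 2 * t * gap_slope t) (at t)"
proof -
  have "0 < t^2 + 1" by (smt (verit) zero_le_power2)
  show ?thesis
    unfolding gap_fun_def[abs_def]
    apply (rule derivative_eq_intros refl | (use assms \<open>0 < t^2 + 1\<close> in simp; fail))+
    using assms \<open>0 < t^2 + 1\<close>
    by (simp add: gap_slope_def divide_simps) (simp add: algebra_simps power2_eq_square power_numeral_reduce)
qed

lemma gap_fun_nonneg:
  assumes "0 < t"
  shows "0 \<le> gap_fun t"
proof -
  have "gap_fun 1 \<le> gap_fun t"
  proof (rule DERIV_sign_change_imp_minimum[of 0 gap_fun "\<lambda>x. 2 * x * gap_slope x"])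
    fix x :: real
    show "0 < x \<Longrightarrow> (gap_fun has_real_derivative 2 * x * gap_slope x) (at x)"
      by (rule gap_fun_has_derivative)
    show "0 < x \<Longrightarrow> x \<le> 1 \<Longrightarrow> 2 * x * gap_slope x \<le> 0"
      using gap_slope_mono[of x 1] by (simp add: gap_slope_def mult_nonneg_nonpos)
    show "1 \<le> x \<Longrightarrow> 0 \<le> 2 * x * gap_slope x"
      using gap_slope_mono[of 1 x] by (simp add: gap_slope_def)
  qed (use assms in simp_all)
  then show ?thesis by (simp add: gap_fun_def)
qed

lemma gap_term_sq_eq:
  fixes a b :: real
  assumes a: "0 < a" and b: "0 < b"
  shows "gap_term (a^2) (b^2) = b^2 * gap_fun (a / b)"
proof -
  have s: "0 < a^2 + b^2" using a b by (intro add_pos_pos) simp_all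
  have ln_a: "ln (2 * a^2 / (a^2 + b^2)) = ln 2 + 2 * ln a - ln (a^2 + b^2)"
    and ln_b: "ln (2 * b^2 / (a^2 + b^2)) = ln 2 + 2 * ln b - ln (a^2 + b^2)"
    using a b s by (simp_all add: ln_div ln_mult ln_realpow)
  have ln_sum: "ln ((a / b)^2 + 1) = ln (a^2 + b^2) - 2 * ln b"
  proof -
    have "(a / b)^2 + 1 = (a^2 + b^2) / b^2" using b by (simp add: field_simps)
    then show ?thesis using b s by (simp add: ln_div ln_realpow)
  qed
  have ln_ratio: "ln (a / b) = ln a - ln b" using a b by (simp add: ln_div)
  show ?thesis
    unfolding gap_term_def gap_fun_def ln_a ln_b ln_sum ln_ratio using a b by (simp add: field_simps)
qed

lemma gap_term_nonneg:
  assumes "0 < p" "0 < q"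
  shows "0 \<le> gap_term p q"
  using gap_term_sq_eq[of "sqrt p" "sqrt q"] gap_fun_nonneg[of "sqrt p / sqrt q"] assms by simp

lemma Psi_hell_JSI_eq_sum_gap_term:
  "Psi n p q / 16 - 10 * hell n p q + 9 * JSI n p q = (\<Sum>i<n. gap_term (p i) (q i))"
  unfolding Psi_def hell_def JSI_def gap_term_def
  by (simp add: sum.distrib sum_subtractf sum_divide_distrib sum_distrib_left algebra_simps)

theorem proposition5p11:
  fixes n :: nat and P Q :: "nat \<Rightarrow> real"
  assumes "n \<ge> 2" and "P \<in> Gamma n" and "Q \<in> Gamma n"
  shows "D_PsiI n P Q \<le> (10/9) * D_Psih n P Q"
proof -
  have "0 \<le> (\<Sum>i<n. gap_term (P i) (Q i))"
    using assms(2,3) by (intro sum_nonneg gap_term_nonneg) (auto simp: Gamma_def)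
  then have "0 \<le> Psi n P Q / 16 - 10 * hell n P Q + 9 * JSI n P Q"
    by (simp only: Psi_hell_JSI_eq_sum_gap_term)
  then show ?thesis unfolding D_PsiI_def D_Psih_def by simp
qed

end
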